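(* Fix $q\in V(G)$ and let $D\in\operatorname{Div}(G)$. Then $D$ is $q$-reduced if and only if $D\in|D|_q$ and $b_q(D)<b_q(D')$ for every $D'\in|D|_q$ with $D'\ne D$.
   Context: $G$ is a finite connected multigraph without loop edges, with vertex set $V(G)$ and edge set $E(G)$. A divisor is an element $D=\sum_{v}D(v)(v)$ of the free abelian group $\operatorname{Div}(G)$ on $V(G)$; $\deg(D)=\sum_vD(v)$. The Laplacian $\Delta$ sends a function $f:V(G)\to\mathbb{Q}$ to $\Delta(f)=\sum_v\Delta_v(f)(v)$ with $\Delta_v(f)=\sum_{\{v,w\}\in E(G)}(f(v)-f(w))$ (edges counted with multiplicity). $D_1\sim D_2$ means $D_1-D_2=\Delta(f)$ for some integer-valued $f$. For $q\in V(G)$, $|D|_q=\{E\in\operatorname{Div}(G): E\sim D,\ E(v)\ge 0\text{ for all }v\ne q\}$. For $A\subseteq V(G)$ and $v\in A$, $\operatorname{outdeg}_A(v)$ is the number of edges joining $v$ to $V(G)\setminus A$. A divisor $D$ is $q$-reduced if (i) $D(v)\ge 0$ for all $v\ne q$, and (ii) for every non-empty $A\subseteq V(G)\setminus\{q\}$ there is $v\in A$ with $D(v)<\operatorname{outdeg}_A(v)$. $Q$ is the Laplacian matrix with respect to a labeling of $V(G)$. For degree-zero divisors $D_1,D_2$, the energy pairing is $\langle D_1,D_2\rangle=[D_1]^TL[D_2]$ for any generalized inverse $L$ of $Q$ ($QLQ=Q$), independent of $L$. For divisors $D,E$, $\langle D,E\rangle_q=\langle D-\deg(D)(q),\,E-\deg(E)(q)\rangle$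 and $b_q(D)=\langle\mathbf{1},D\rangle_q$ with $\mathbf{1}=\sum_{v\in V(G)}(v)$. *)

theory Defs
  imports Complex_Main
begin

definition multigraph :: "'v set \<Rightarrow> ('v \<Rightarrow> 'v \<Rightarrow> nat) \<Rightarrow> bool" where
  "multigraph V m \<longleftrightarrow> finite V \<and> V \<noteq> {} \<and>
     (\<forall>v w. m v w = m w v) \<and> (\<forall>v. m v v = 0) \<and>
     (\<forall>v w. (v \<notin> V \<or> w \<notin> V) \<longrightarrow> m v w = 0) \<and>
     (\<forall>v\<in>V. \<forall>w\<in>V. (\<lambda>x y. m x y > 0)\<^sup>*\<^sup>* v w)"

definition is_divisor :: "'v set \<Rightarrow> ('v \<Rightarrow> int) \<Rightarrow> bool" where
  "is_divisor V D \<longleftrightarrow> (\<forall>v. v \<notin> V \<longrightarrow> D v = 0)"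

definition div_deg :: "'v set \<Rightarrow> ('v \<Rightarrow> int) \<Rightarrow> int" where
  "div_deg V D = (\<Sum>v\<in>V. D v)"

definition point_div :: "'v \<Rightarrow> 'v \<Rightarrow> int" where
  "point_div q = (\<lambda>v. if v = q then 1 else 0)"

definition one_div :: "'v set \<Rightarrow> 'v \<Rightarrow> int" where
  "one_div V = (\<lambda>v. if v \<in> V then 1 else 0)"

definition laplacian :: "'v set \<Rightarrow> ('v \<Rightarrow> 'v \<Rightarrow> nat) \<Rightarrow> ('v \<Rightarrow> int) \<Rightarrow> 'v \<Rightarrow> int" where
  "laplacian V m f = (\<lambda>v. if v \<in> V then (\<Sum>w\<in>V. int (m v w) * (f v - f w)) else 0)"

definition lin_equiv :: "'v set \<Rightarrow> ('v \<Rightarrow> 'v \<Rightarrow> nat) \<Rightarrow> ('v \<Rightarrow> int) \<Rightarrow> ('v \<Rightarrow> int) \<Rightarrow> bool" where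
  "lin_equiv V m D1 D2 \<longleftrightarrow> (\<exists>f. (\<lambda>v. D1 v - D2 v) = laplacian V m f)"

definition complete_linsys :: "'v set \<Rightarrow> ('v \<Rightarrow> 'v \<Rightarrow> nat) \<Rightarrow> 'v \<Rightarrow> ('v \<Rightarrow> int) \<Rightarrow> ('v \<Rightarrow> int) set" where
  "complete_linsys V m q D =
     {E. is_divisor V E \<and> lin_equiv V m E D \<and> (\<forall>v\<in>V. v \<noteq> q \<longrightarrow> E v \<ge> 0)}"

definition outdeg :: "'v set \<Rightarrow> ('v \<Rightarrow> 'v \<Rightarrow> nat) \<Rightarrow> 'v set \<Rightarrow> 'v \<Rightarrow> int" where
  "outdeg V m A v = (\<Sum>w\<in>V - A. int (m v w))"

definition q_reduced :: "'v set \<Rightarrow> ('v \<Rightarrow> 'v \<Rightarrow> nat) \<Rightarrow> 'v \<Rightarrow> ('v \<Rightarrow> int) \<Rightarrow> bool" where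
  "q_reduced V m q D \<longleftrightarrow>
     (\<forall>v\<in>V. v \<noteq> q \<longrightarrow> D v \<ge> 0) \<and>
     (\<forall>A. A \<subseteq> V - {q} \<and> A \<noteq> {} \<longrightarrow> (\<exists>v\<in>A. D v < outdeg V m A v))"

definition lap_matrix :: "'v set \<Rightarrow> ('v \<Rightarrow> 'v \<Rightarrow> nat) \<Rightarrow> 'v \<Rightarrow> 'v \<Rightarrow> rat" where
  "lap_matrix V m v w = (if v = w then of_nat (\<Sum>u\<in>V. m v u) else - of_nat (m v w))"

definition gen_inverse :: "'v set \<Rightarrow> ('v \<Rightarrow> 'v \<Rightarrow> rat) \<Rightarrow> ('v \<Rightarrow> 'v \<Rightarrow> rat) \<Rightarrow> bool" where
  "gen_inverse V Q L \<longleftrightarrow>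
     (\<forall>i\<in>V. \<forall>j\<in>V. (\<Sum>k\<in>V. \<Sum>l\<in>V. Q i k * L k l * Q l j) = Q i j)"

text \<open>Energy pairing \<langle>D1,D2\<rangle> = [D1]^T L [D2] for a (chosen) generalized inverse L of Q;
  the value is independent of the choice for degree-zero divisors.\<close>
definition energy :: "'v set \<Rightarrow> ('v \<Rightarrow> 'v \<Rightarrow> nat) \<Rightarrow> ('v \<Rightarrow> int) \<Rightarrow> ('v \<Rightarrow> int) \<Rightarrow> rat" where
  "energy V m D1 D2 =
     (let L = (SOME L. gen_inverse V (lap_matrix V m) L)
      in (\<Sum>u\<in>V. \<Sum>w\<in>V. of_int (D1 u) * L u w * of_int (D2 w)))"

definition energy_q :: "'v set \<Rightarrow> ('v \<Rightarrow> 'v \<Rightarrow> nat) \<Rightarrow> 'v \<Rightarrow> ('v \<Rightarrow> int) \<Rightarrow> ('v \<Rightarrow> int) \<Rightarrow> rat" where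
  "energy_q V m q D E =
     energy V m (\<lambda>v. D v - div_deg V D * point_div q v) (\<lambda>v. E v - div_deg V E * point_div q v)"

definition b_q :: "'v set \<Rightarrow> ('v \<Rightarrow> 'v \<Rightarrow> nat) \<Rightarrow> 'v \<Rightarrow> ('v \<Rightarrow> int) \<Rightarrow> rat" where
  "b_q V m q D = energy_q V m q (one_div V) D"

end

theory Submission
  imports Defs "Jordan_Normal_Form.Determinant"
begin

(*
  The key identity (lemma b_q_difference) is: if D' - D = \<Delta>(f), then
      b_q(D') - b_q(D) = \<Sum>_{v\<in>V} (f(v) - f(q)).
  To prove it we first show that the Laplacian matrix Q has a generalized inverse
  (lemma generalized_inverse_exists): by the maximum principle for functions that are
  harmonic away from q, the reduced Laplacian (rows and columns V - {q}) is injective,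
  hence invertible, and its inverse extends by zero to a generalized inverse of Q.
  The divisor 1 - |V|(q) also lies in the image of Q, so for symmetric Q the pairing
  (Qy)^T L (Qf) collapses to (Qy)^T f, which yields the identity.

  The theorem then follows from two combinatorial facts about firing sets:
  if D is q-reduced and D + \<Delta>(f) is effective away from q, then f attains its
  minimum at q (so b_q strictly increases unless f is constant); conversely, if some
  non-empty A \<subseteq> V - {q} violates reducedness, firing A (f = -1 on A) yields an
  equivalent divisor, effective away from q, with b_q smaller by |A|.
*)

text \<open>Transferred to
  Jordan_Normal_Form matrices via an enumeration of S.\<close>
lemma injective_square_system_solvable:
  fixes M :: "'a \<Rightarrow> 'a \<Rightarrow> 'k :: field" and S :: "'a set" and b :: "'a \<Rightarrow> 'k"
  assumes fin: "finite S"
    and inj: "\<And>y. \<forall>v\<in>S. (\<Sum>k\<in>S. M v k * y k) = 0 \<Longrightarrow> \<forall>k\<in>S. y k = 0"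
  shows "\<exists>y. \<forall>v\<in>S. (\<Sum>k\<in>S. M v k * y k) = b v"
proof -
  define N where "N = card S"
  obtain e where e: "bij_betw e {0..<N} S"
    using ex_bij_betw_nat_finite[OF fin] N_def by blast
  define ie where "ie = inv_into {0..<N} e"
  have ie_right: "\<And>s. s \<in> S \<Longrightarrow> ie s < N \<and> e (ie s) = s"
    using e unfolding ie_def
    by (metis atLeastLessThan_iff bij_betw_def bij_betw_inv_into_right inv_into_into)
  have ie_left: "\<And>i. i < N \<Longrightarrow> ie (e i) = i"
    using e unfolding ie_def by (meson atLeastLessThan_iff bij_betw_inv_into_left zero_le)
  define A where "A = mat N N (\<lambda>(i,j). M (e i) (e j))"
  have A: "A \<in> carrier_mat N N" unfolding A_def by simp
  have mult_A: "(\<Sum>k\<in>S. M s k * v $ ie k) = (A *\<^sub>v v) $ ie s"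
    if v: "v \<in> carrier_vec N" and s: "s \<in> S" for v s
  proof -
    have "(A *\<^sub>v v) $ ie s = (\<Sum>j\<in>{0..<N}. M s (e j) * v $ j)"
      using ie_right[OF s] v unfolding A_def by (simp add: mult_mat_vec_def scalar_prod_def)
    also have "\<dots> = (\<Sum>k\<in>S. M s k * v $ ie k)"
      using sum.reindex_bij_betw[OF e, of "\<lambda>k. M s k * v $ ie k"] by (simp add: ie_left)
    finally show ?thesis by simp
  qed
  have "det A \<noteq> 0"
  proof
    assume "det A = 0"
    then obtain v where v: "v \<in> carrier_vec N" "v \<noteq> 0\<^sub>v N" "A *\<^sub>v v = 0\<^sub>v N"
      using det_0_iff_vec_prod_zero_field[OF A] by blast
    have "\<forall>s\<in>S. (\<Sum>k\<in>S. M s k * v $ ie k) = 0"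
      using mult_A v ie_right by simp
    hence zero: "\<forall>k\<in>S. v $ ie k = 0" using inj[of "\<lambda>k. v $ ie k"] by blast
    have "v = 0\<^sub>v N"
    proof (rule eq_vecI)
      fix i assume "i < dim_vec (0\<^sub>v N)"
      hence i: "i < N" by simp
      have "e i \<in> S" using e i by (auto simp: bij_betw_def)
      thus "v $ i = 0\<^sub>v N $ i" using zero ie_left[OF i] i by fastforce
    qed (use v in simp)
    with v show False by simp
  qed
  from det_non_zero_imp_unit[OF A this, of "()"]
  obtain B where B: "B \<in> carrier_mat N N" "A * B = 1\<^sub>m N"
    unfolding Units_def ring_mat_def by auto
  define rhs where "rhs = vec N (\<lambda>i. b (e i))"
  have rhs: "rhs \<in> carrier_vec N" unfolding rhs_def by simp
  define z where "z = B *\<^sub>v rhs"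
  have z: "z \<in> carrier_vec N" using B rhs unfolding z_def by simp
  have "A *\<^sub>v z = rhs"
    using assoc_mult_mat_vec[OF A B(1) rhs] B(2) rhs unfolding z_def by simp
  hence "\<forall>s\<in>S. (\<Sum>k\<in>S. M s k * z $ ie k) = b s"
    using mult_A[OF z] ie_right unfolding rhs_def by simp
  thus ?thesis by (rule exI[of _ "\<lambda>k. z $ ie k"])
qed

lemma mg_finite: "multigraph V m \<Longrightarrow> finite V"
  by (simp add: multigraph_def)

lemma mg_sym: "multigraph V m \<Longrightarrow> m v w = m w v"
  by (simp add: multigraph_def)

lemma mg_no_loops: "multigraph V m \<Longrightarrow> m v v = 0"
  by (simp add: multigraph_def)

lemma mg_outside: "multigraph V m \<Longrightarrow> v \<notin> V \<or> w \<notin> V \<Longrightarrow> m v w = 0"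
  by (simp add: multigraph_def)

lemma mg_closed_set_is_everything:
  assumes mg: "multigraph V m" and A: "A \<subseteq> V"
    and closed: "\<And>v w. v \<in> A \<Longrightarrow> 0 < m v w \<Longrightarrow> w \<in> A"
    and v: "v \<in> A" and w: "w \<in> V"
  shows "w \<in> A"
proof -
  have "(\<lambda>x y. m x y > 0)\<^sup>*\<^sup>* v w" using mg v w A unfolding multigraph_def by blast
  thus ?thesis by (induction rule: rtranclp_induct) (use v closed in auto)
qed

lemma lap_matrix_alt:
  "multigraph V m \<Longrightarrow>
   lap_matrix V m v k = (if v = k then of_nat (\<Sum>u\<in>V. m v u) else 0) - of_nat (m v k)"
  by (auto simp: lap_matrix_def mg_no_loops)

lemma lap_matrix_row:
  assumes mg: "multigraph V m" and v: "v \<in> V"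
  shows "(\<Sum>k\<in>V. lap_matrix V m v k * y k) = (\<Sum>k\<in>V. of_nat (m v k) * (y v - y k))"
proof -
  have "(\<Sum>k\<in>V. lap_matrix V m v k * y k)
      = (\<Sum>k\<in>V. (if v = k then of_nat (\<Sum>u\<in>V. m v u) * y k else 0))
        - (\<Sum>k\<in>V. of_nat (m v k) * y k)"
    unfolding sum_subtractf[symmetric]
    by (rule sum.cong) (simp_all add: lap_matrix_alt[OF mg] left_diff_distrib)
  also have "(\<Sum>k\<in>V. (if v = k then of_nat (\<Sum>u\<in>V. m v u) * y k else 0))
           = (\<Sum>k\<in>V. of_nat (m v k) * y v)"
    using mg_finite[OF mg] v by (simp add: sum_distrib_right)
  finally show ?thesis by (simp add: right_diff_distrib sum_subtractf)
qed

lemma lap_matrix_sym: "multigraph V m \<Longrightarrow> lap_matrix V m v k = lap_matrix V m k v"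
  by (auto simp: lap_matrix_def mg_sym)

text \<open>The columns of Q sum to zero, so row q is minus the sum of the other rows.\<close>
lemma lap_matrix_row_q:
  assumes mg: "multigraph V m" and q: "q \<in> V" and k: "k \<in> V"
  shows "lap_matrix V m q k = - (\<Sum>v\<in>V-{q}. lap_matrix V m v k)"
proof -
  have "(\<Sum>v\<in>V. lap_matrix V m v k)
      = (\<Sum>v\<in>V. (if v = k then of_nat (\<Sum>u\<in>V. m v u) else 0)) - (\<Sum>v\<in>V. of_nat (m v k))"
    by (simp add: lap_matrix_alt[OF mg] sum_subtractf)
  also have "\<dots> = 0" using mg_finite[OF mg] k by (simp add: mg_sym[OF mg, of _ k])
  finally show ?thesis
    using sum.remove[OF mg_finite[OF mg] q, of "\<lambda>v. lap_matrix V m v k"] by simp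
qed

lemma lap_matrix_apply_q:
  assumes mg: "multigraph V m" and q: "q \<in> V"
  shows "(\<Sum>k\<in>V. lap_matrix V m q k * y k) = - (\<Sum>v\<in>V-{q}. \<Sum>k\<in>V. lap_matrix V m v k * y k)"
proof -
  have "(\<Sum>k\<in>V. lap_matrix V m q k * y k) = (\<Sum>k\<in>V. - (\<Sum>v\<in>V-{q}. lap_matrix V m v k * y k))"
    by (rule sum.cong) (simp_all add: lap_matrix_row_q[OF mg q] sum_distrib_right)
  also have "\<dots> = - (\<Sum>v\<in>V-{q}. \<Sum>k\<in>V. lap_matrix V m v k * y k)"
    by (simp add: sum_negf sum.swap[of _ V])
  finally show ?thesis .
qed

lemma laplacian_eq_lap_matrix:
  assumes mg: "multigraph V m" and v: "v \<in> V"
  shows "of_int (laplacian V m f v) = (\<Sum>k\<in>V. lap_matrix V m v k * of_int (f k))"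
  unfolding lap_matrix_row[OF mg v] using v by (simp add: laplacian_def)

text \<open>The entries of \<Delta>(f) sum to zero: every edge contributes f(v) - f(w) at one end
  and f(w) - f(v) at the other.\<close>
lemma laplacian_degree_zero:
  assumes mg: "multigraph V m"
  shows "(\<Sum>v\<in>V. laplacian V m f v) = 0"
proof -
  have "(\<Sum>v\<in>V. laplacian V m f v)
      = (\<Sum>v\<in>V. \<Sum>w\<in>V. int (m v w) * f v) - (\<Sum>v\<in>V. \<Sum>w\<in>V. int (m v w) * f w)"
    by (simp add: laplacian_def algebra_simps sum_subtractf)
  also have "(\<Sum>v\<in>V. \<Sum>w\<in>V. int (m v w) * f w) = (\<Sum>w\<in>V. \<Sum>v\<in>V. int (m w v) * f w)"
    by (subst sum.swap) (simp add: mg_sym[OF mg])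
  finally show ?thesis by simp
qed

lemma laplacian_on_level_set:
  assumes mg: "multigraph V m" and A: "A \<subseteq> V" and v: "v \<in> A"
    and level: "\<And>w. w \<in> A \<Longrightarrow> f w = f v"
  shows "laplacian V m f v = (\<Sum>w\<in>V-A. int (m v w) * (f v - f w))"
proof -
  have "laplacian V m f v = (\<Sum>w\<in>V. int (m v w) * (f v - f w))"
    using v A by (auto simp: laplacian_def)
  also have "\<dots> = (\<Sum>w\<in>V-A. int (m v w) * (f v - f w))"
    using mg_finite[OF mg] A level by (intro sum.mono_neutral_right) auto
  finally show ?thesis .
qed

section \<open>The reduced Laplacian is invertible\<close>

text \<open>Maximum principle: a function vanishing at q and harmonic at every other vertex
  is non-positive, since the set where it attains a positive maximum would be closed
  under adjacency and hence contain q.\<close>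
lemma maximum_principle:
  fixes y :: "'v \<Rightarrow> rat"
  assumes mg: "multigraph V m" and q: "q \<in> V" and yq: "y q = 0"
    and harmonic: "\<forall>v\<in>V - {q}. (\<Sum>k\<in>V. of_nat (m v k) * (y v - y k)) = 0"
  shows "\<forall>v\<in>V. y v \<le> 0"
proof (rule ccontr)
  assume "\<not> ?thesis"
  then obtain v0 where v0: "v0 \<in> V" "y v0 > 0" by force
  have fin: "finite V" using mg by (rule mg_finite)
  define M where "M = Max (y ` V)"
  have M_ge: "\<And>w. w \<in> V \<Longrightarrow> y w \<le> M" unfolding M_def using fin by simp
  have "M \<in> y ` V" unfolding M_def using fin v0 by (intro Max_in) auto
  then obtain a where a: "a \<in> V" "y a = M" by auto
  define A where "A = {v\<in>V. y v = M}"
  have q_notin: "q \<notin> A" using M_ge[OF v0(1)] v0 yq unfolding A_def by auto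
  have closed: "w \<in> A" if vA: "v \<in> A" and edge: "0 < m v w" for v w
  proof -
    have vV: "v \<in> V" and yv: "y v = M" using vA by (auto simp: A_def)
    have wV: "w \<in> V" using edge mg_outside[OF mg, of v w] by auto
    have terms_nonneg: "\<forall>k\<in>V. of_nat (m v k) * (y v - y k) \<ge> 0"
      using M_ge yv by simp
    have "v \<in> V - {q}" using vV vA q_notin by auto
    hence "(\<Sum>k\<in>V. of_nat (m v k) * (y v - y k)) = 0" using harmonic by blast
    hence "\<forall>k\<in>V. of_nat (m v k) * (y v - y k) = 0"
      using sum_nonneg_eq_0_iff[OF fin, of "\<lambda>k. of_nat (m v k) * (y v - y k)"] terms_nonneg
      by simp
    hence "of_nat (m v w) * (y v - y w) = 0" using wV by blast
    hence "y w = M" using edge yv by (simp del: of_nat_eq_0_iff)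
    thus "w \<in> A" using wV by (simp add: A_def)
  qed
  have "q \<in> A"
    by (rule mg_closed_set_is_everything[OF mg _ closed, where v=a]) (use a q in \<open>auto simp: A_def\<close>)
  with q_notin show False by simp
qed

text \<open>Applying the maximum principle to y and -y: the reduced Laplacian is injective.\<close>
lemma reduced_laplacian_injective:
  fixes y :: "'v \<Rightarrow> rat"
  assumes mg: "multigraph V m" and q: "q \<in> V"
    and kernel: "\<forall>v\<in>V-{q}. (\<Sum>k\<in>V-{q}. lap_matrix V m v k * y k) = 0"
  shows "\<forall>k\<in>V-{q}. y k = 0"
proof -
  define y' where "y' = (\<lambda>k. if k = q then 0 else y k)"
  have "\<forall>v\<in>V-{q}. (\<Sum>k\<in>V. lap_matrix V m v k * y' k) = 0"
    using kernel unfolding y'_def by (simp add: sum.remove[OF mg_finite[OF mg] q])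
  hence harmonic: "\<forall>v\<in>V-{q}. (\<Sum>k\<in>V. of_nat (m v k) * (y' v - y' k)) = 0"
    by (simp add: lap_matrix_row[OF mg])
  moreover have "(\<Sum>k\<in>V. of_nat (m v k) * ((- y') v - (- y') k))
      = - (\<Sum>k\<in>V. of_nat (m v k) * (y' v - y' k))" for v
    by (simp add: sum_negf[symmetric] algebra_simps)
  ultimately have harmonic_neg:
    "\<forall>v\<in>V-{q}. (\<Sum>k\<in>V. of_nat (m v k) * ((- y') v - (- y') k)) = 0"
    by simp
  have "\<forall>v\<in>V. y' v \<le> 0" by (rule maximum_principle[OF mg q _ harmonic]) (simp add: y'_def)
  moreover have "\<forall>v\<in>V. (- y') v \<le> 0"
    by (rule maximum_principle[OF mg q _ harmonic_neg]) (simp add: y'_def)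
  ultimately have zero: "y' k = 0" if "k \<in> V" for k
    using that by (metis add.inverse_neutral antisym neg_le_iff_le uminus_apply)
  show ?thesis
  proof
    fix k assume "k \<in> V - {q}"
    thus "y k = 0" using zero[of k] by (simp add: y'_def)
  qed
qed

lemma reduced_laplacian_surjective:
  fixes b :: "'v \<Rightarrow> rat"
  assumes mg: "multigraph V m" and q: "q \<in> V"
  shows "\<exists>y. y q = 0 \<and> (\<forall>v\<in>V-{q}. (\<Sum>k\<in>V. lap_matrix V m v k * y k) = b v)"
proof -
  have fin: "finite V" using mg by (rule mg_finite)
  obtain y where y: "\<forall>v\<in>V-{q}. (\<Sum>k\<in>V-{q}. lap_matrix V m v k * y k) = b v"
    using injective_square_system_solvable[of "V-{q}" "lap_matrix V m" b]
      fin reduced_laplacian_injective[OF mg q] by blast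
  show ?thesis
    by (rule exI[of _ "\<lambda>k. if k = q then 0 else y k"]) (use y in \<open>simp add: sum.remove[OF fin q]\<close>)
qed

section \<open>Generalized inverse and the energy pairing\<close>

text \<open>Column l of L is the solution of Qy = e_l on V - {q} with y(q) = 0 (and zero for
  l = q); then QL is the identity off row q, row q of QL is fixed by the column sums,
  and QLQ = Q follows.\<close>
lemma generalized_inverse_exists:
  assumes mg: "multigraph V m" and q: "q \<in> V"
  shows "\<exists>L. gen_inverse V (lap_matrix V m) L"
proof -
  let ?Q = "lap_matrix V m"
  have fin: "finite V" using mg by (rule mg_finite)
  have "\<forall>l. \<exists>y. y q = 0 \<and> (\<forall>v\<in>V-{q}. (\<Sum>k\<in>V. ?Q v k * y k) = (if v = l then 1 else 0))"
    by (intro allI reduced_laplacian_surjective[OF mg q])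
  then obtain sol where
    sol: "\<And>l v. v \<in> V-{q} \<Longrightarrow> (\<Sum>k\<in>V. ?Q v k * sol l k) = (if v = l then 1 else 0)"
    by metis
  define L where "L = (\<lambda>k l. if l \<in> V - {q} then sol l k else 0)"
  have QL_off_q: "(\<Sum>k\<in>V. ?Q i k * L k l) = (if i = l then 1 else 0)"
    if i: "i \<in> V-{q}" and l: "l \<in> V" for i l
    using i l sol[OF i, of l] unfolding L_def by (cases "l = q") auto
  have QL_q: "(\<Sum>k\<in>V. ?Q q k * L k l) = (if l = q then 0 else -1)" if l: "l \<in> V" for l
    unfolding lap_matrix_apply_q[OF mg q] using QL_off_q l fin by (simp add: sum.delta)
  have "gen_inverse V ?Q L"
    unfolding gen_inverse_def
  proof (intro ballI)
    fix i j assume i: "i \<in> V" and j: "j \<in> V"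
    have "(\<Sum>k\<in>V. \<Sum>l\<in>V. ?Q i k * L k l * ?Q l j) = (\<Sum>l\<in>V. (\<Sum>k\<in>V. ?Q i k * L k l) * ?Q l j)"
      by (subst sum.swap) (simp add: sum_distrib_right)
    also have "\<dots> = ?Q i j"
    proof (cases "i = q")
      case True
      have "(\<Sum>l\<in>V. (\<Sum>k\<in>V. ?Q i k * L k l) * ?Q l j)
          = (\<Sum>l\<in>V. (if l = q then 0 else - ?Q l j))"
        using QL_q True by (intro sum.cong) auto
      also have "\<dots> = (\<Sum>l\<in>V-{q}. - ?Q l j)"
        by (simp add: sum.remove[OF fin q])
      also have "\<dots> = ?Q i j" using lap_matrix_row_q[OF mg q j] True by (simp add: sum_negf)
      finally show ?thesis .
    next
      case False
      hence "(\<Sum>l\<in>V. (\<Sum>k\<in>V. ?Q i k * L k l) * ?Q l j) = (\<Sum>l\<in>V. (if i = l then ?Q l j else 0))"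
        using QL_off_q i by (intro sum.cong) auto
      also have "\<dots> = ?Q i j" using fin i by simp
      finally show ?thesis .
    qed
    finally show "(\<Sum>k\<in>V. \<Sum>l\<in>V. ?Q i k * L k l * ?Q l j) = ?Q i j" .
  qed
  thus ?thesis by blast
qed

lemma gen_inverse_pairing:
  fixes Q L :: "'a \<Rightarrow> 'a \<Rightarrow> 'k :: comm_ring_1" and y g :: "'a \<Rightarrow> 'k"
  assumes sym: "\<And>i j. i \<in> V \<Longrightarrow> j \<in> V \<Longrightarrow> Q i j = Q j i"
    and gi: "\<And>i j. i \<in> V \<Longrightarrow> j \<in> V \<Longrightarrow> (\<Sum>k\<in>V. \<Sum>l\<in>V. Q i k * L k l * Q l j) = Q i j"
  shows "(\<Sum>u\<in>V. \<Sum>w\<in>V. (\<Sum>k\<in>V. Q u k * y k) * L u w * (\<Sum>l\<in>V. Q w l * g l))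
       = (\<Sum>l\<in>V. (\<Sum>k\<in>V. Q l k * y k) * g l)"
proof -
  have "(\<Sum>u\<in>V. \<Sum>w\<in>V. (\<Sum>k\<in>V. Q u k * y k) * L u w * (\<Sum>l\<in>V. Q w l * g l))
      = (\<Sum>u\<in>V. \<Sum>w\<in>V. \<Sum>k\<in>V. \<Sum>l\<in>V. y k * g l * (Q k u * L u w * Q w l))"
    by (intro sum.cong refl) (simp add: sum_distrib_left sum_distrib_right sym mult_ac)
  also have "\<dots> = (\<Sum>u\<in>V. \<Sum>k\<in>V. \<Sum>w\<in>V. \<Sum>l\<in>V. y k * g l * (Q k u * L u w * Q w l))"
    by (rule sum.cong[OF refl], rule sum.swap)
  also have "\<dots> = (\<Sum>k\<in>V. \<Sum>u\<in>V. \<Sum>l\<in>V. \<Sum>w\<in>V. y k * g l * (Q k u * L u w * Q w l))"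
    by (subst sum.swap) (rule sum.cong[OF refl], rule sum.cong[OF refl], rule sum.swap)
  also have "\<dots> = (\<Sum>k\<in>V. \<Sum>l\<in>V. \<Sum>u\<in>V. \<Sum>w\<in>V. y k * g l * (Q k u * L u w * Q w l))"
    by (rule sum.cong[OF refl], rule sum.swap)
  also have "\<dots> = (\<Sum>k\<in>V. \<Sum>l\<in>V. y k * g l * Q k l)"
    by (intro sum.cong refl) (simp add: sum_distrib_left[symmetric] gi)
  also have "\<dots> = (\<Sum>l\<in>V. (\<Sum>k\<in>V. Q l k * y k) * g l)"
    by (subst sum.swap) (simp add: sum_distrib_right sum_distrib_left sym mult_ac)
  finally show ?thesis .
qed

lemma one_minus_deg_q_in_image:
  assumes mg: "multigraph V m" and q: "q \<in> V"
  shows "\<exists>y. \<forall>u\<in>V. (\<Sum>k\<in>V. lap_matrix V m u k * y k)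
            = of_int (one_div V u - div_deg V (one_div V) * point_div q u)"
proof -
  have fin: "finite V" using mg by (rule mg_finite)
  obtain y where y: "y q = 0" "\<forall>v\<in>V-{q}. (\<Sum>k\<in>V. lap_matrix V m v k * y k) = 1"
    using reduced_laplacian_surjective[OF mg q, of "\<lambda>_. 1"] by blast
  have "(\<Sum>k\<in>V. lap_matrix V m q k * y k) = - of_nat (card (V - {q}))"
    using lap_matrix_apply_q[OF mg q] y(2) by simp
  hence "(\<Sum>k\<in>V. lap_matrix V m q k * y k) = 1 - of_nat (card V)"
    using card.remove[OF fin q] by simp
  with y(2) show ?thesis
    by (intro exI[of _ y]) (auto simp: one_div_def point_div_def div_deg_def)
qed

text \<open>Principal divisors have degree zero, so linear equivalence preserves the degree.\<close>
lemma lin_equiv_same_degree: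
  assumes mg: "multigraph V m" and eq: "(\<lambda>v. D' v - D v) = laplacian V m f"
  shows "div_deg V D' = div_deg V D"
proof -
  have "div_deg V D' - div_deg V D = (\<Sum>v\<in>V. laplacian V m f v)"
    unfolding div_deg_def sum_subtractf[symmetric] by (simp add: eq[symmetric])
  thus ?thesis using laplacian_degree_zero[OF mg] by simp
qed

lemma b_q_difference:
  assumes mg: "multigraph V m" and q: "q \<in> V"
    and eq: "(\<lambda>v. D' v - D v) = laplacian V m f"
  shows "b_q V m q D' - b_q V m q D = of_int (\<Sum>v\<in>V. f v - f q)"
proof -
  let ?Q = "lap_matrix V m"
  have fin: "finite V" using mg by (rule mg_finite)
  define L where "L = (SOME L. gen_inverse V ?Q L)"
  have gi: "gen_inverse V ?Q L"
    unfolding L_def using generalized_inverse_exists[OF mg q] by (rule someI_ex)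
  define X where "X = (\<lambda>v. one_div V v - div_deg V (one_div V) * point_div q v)"
  obtain y where y: "\<forall>u\<in>V. (\<Sum>k\<in>V. ?Q u k * y k) = of_int (X u)"
    using one_minus_deg_q_in_image[OF mg q] unfolding X_def by blast
  have diff: "D' v - D v = laplacian V m f v" for v using eq by metis
  have b_q_unfolded: "b_q V m q F = (\<Sum>u\<in>V. \<Sum>w\<in>V.
      of_int (X u) * L u w * of_int (F w - div_deg V F * point_div q w))" for F
    unfolding b_q_def energy_q_def energy_def X_def L_def Let_def by simp
  have "b_q V m q D' - b_q V m q D
      = (\<Sum>u\<in>V. \<Sum>w\<in>V. of_int (X u) * L u w * of_int (laplacian V m f w))"
    unfolding b_q_unfolded sum_subtractf[symmetric]
    by (intro sum.cong refl)
      (simp add: lin_equiv_same_degree[OF mg eq] diff[symmetric] algebra_simps)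
  also have "\<dots> = (\<Sum>u\<in>V. \<Sum>w\<in>V.
      (\<Sum>k\<in>V. ?Q u k * y k) * L u w * (\<Sum>l\<in>V. ?Q w l * of_int (f l)))"
    by (intro sum.cong refl) (simp add: y laplacian_eq_lap_matrix[OF mg])
  also have "\<dots> = (\<Sum>l\<in>V. (\<Sum>k\<in>V. ?Q l k * y k) * of_int (f l))"
    by (rule gen_inverse_pairing)
      (use lap_matrix_sym[OF mg] gi in \<open>auto simp: gen_inverse_def\<close>)
  also have "\<dots> = of_int (\<Sum>l\<in>V. X l * f l)"
    by (simp add: y)
  also have "(\<Sum>l\<in>V. X l * f l) = (\<Sum>l\<in>V. f l - (if l = q then int (card V) * f q else 0))"
    by (intro sum.cong refl) (auto simp: X_def one_div_def point_div_def div_deg_def algebra_simps)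
  also have "\<dots> = (\<Sum>v\<in>V. f v) - int (card V) * f q"
    using fin q by (simp add: sum_subtractf)
  also have "\<dots> = (\<Sum>v\<in>V. f v - f q)" by (simp add: sum_subtractf)
  finally show ?thesis .
qed

section \<open>Firing sets and q-reduced divisors\<close>

lemma self_in_complete_linsys:
  assumes "is_divisor V D" and "\<forall>v\<in>V. v \<noteq> q \<longrightarrow> D v \<ge> 0"
  shows "D \<in> complete_linsys V m q D"
proof -
  have "lin_equiv V m D D" unfolding lin_equiv_def
    by (rule exI[of _ "\<lambda>_. 0"]) (simp add: laplacian_def fun_eq_iff)
  with assms show ?thesis by (simp add: complete_linsys_def)
qed

text \<open>If D is q-reduced and D + \<Delta>(f) is effective away from q, then f is minimal at q:
  otherwise the set A where f attains its minimum avoids q, and at the vertex of A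
  supplied by reducedness the divisor D + \<Delta>(f) would be negative.\<close>
lemma reduced_potential_minimal_at_q:
  assumes mg: "multigraph V m" and red: "q_reduced V m q D"
    and eff: "\<forall>v\<in>V. v \<noteq> q \<longrightarrow> 0 \<le> D v + laplacian V m f v"
  shows "\<forall>v\<in>V. f q \<le> f v"
proof (rule ccontr)
  assume "\<not> ?thesis"
  then obtain v0 where v0: "v0 \<in> V" "f v0 < f q" by force
  have fin: "finite V" using mg by (rule mg_finite)
  define M where "M = Min (f ` V)"
  have M_le: "\<And>w. w \<in> V \<Longrightarrow> M \<le> f w" unfolding M_def using fin by simp
  have "M \<in> f ` V" unfolding M_def using fin v0 by (intro Min_in) auto
  then obtain a where a: "a \<in> V" "f a = M" by auto
  define A where "A = {v\<in>V. f v = M}"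
  have A_sub: "A \<subseteq> V - {q}" using M_le[OF v0(1)] v0 by (auto simp: A_def)
  have "A \<noteq> {}" using a by (auto simp: A_def)
  then obtain v where vA: "v \<in> A" and lt: "D v < outdeg V m A v"
    using red A_sub unfolding q_reduced_def by blast
  have vV: "v \<in> V" and vq: "v \<noteq> q" and fv: "f v = M" using vA A_sub by (auto simp: A_def)
  have "laplacian V m f v = (\<Sum>w\<in>V-A. int (m v w) * (f v - f w))"
    by (rule laplacian_on_level_set[OF mg _ vA]) (use A_sub fv in \<open>auto simp: A_def\<close>)
  also have "\<dots> \<le> (\<Sum>w\<in>V-A. int (m v w) * -1)"
  proof (rule sum_mono)
    fix w assume "w \<in> V - A"
    hence "f v - f w \<le> -1" using fv M_le by (force simp: A_def)
    thus "int (m v w) * (f v - f w) \<le> int (m v w) * -1" by (intro mult_left_mono) auto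
  qed
  also have "\<dots> = - outdeg V m A v" by (simp add: outdeg_def sum_negf)
  finally have "D v + laplacian V m f v < 0" using lt by simp
  thus False using eff vV vq by auto
qed

text \<open>Energy minimality of reduced divisors: moving to any other divisor of |D|_q means
  adding \<Delta>(f) with f minimal at q and not constant, which raises b_q.\<close>
lemma reduced_b_q_strictly_minimal:
  assumes mg: "multigraph V m" and q: "q \<in> V" and red: "q_reduced V m q D"
    and D': "D' \<in> complete_linsys V m q D" "D' \<noteq> D"
  shows "b_q V m q D < b_q V m q D'"
proof -
  have fin: "finite V" using mg by (rule mg_finite)
  from D' obtain f where eq: "(\<lambda>v. D' v - D v) = laplacian V m f"
    unfolding complete_linsys_def lin_equiv_def by blast
  have diff: "D' v = D v + laplacian V m f v" for v using eq by (metis diff_add_cancel add.commute)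
  have "\<forall>v\<in>V. v \<noteq> q \<longrightarrow> 0 \<le> D v + laplacian V m f v"
    using D'(1) by (auto simp: complete_linsys_def diff)
  hence nonneg: "\<forall>v\<in>V. 0 \<le> f v - f q"
    using reduced_potential_minimal_at_q[OF mg red] by auto
  have "(\<Sum>v\<in>V. f v - f q) \<noteq> 0"
  proof
    assume "(\<Sum>v\<in>V. f v - f q) = 0"
    hence "\<forall>v\<in>V. f v - f q = 0"
      using sum_nonneg_eq_0_iff[OF fin, of "\<lambda>v. f v - f q"] nonneg by blast
    hence "\<forall>v\<in>V. f v = f q" by simp
    hence "laplacian V m f = (\<lambda>_. 0)" by (simp add: laplacian_def fun_eq_iff)
    hence "D' = D" by (simp add: diff fun_eq_iff)
    with D'(2) show False ..
  qed
  hence "(\<Sum>v\<in>V. f v - f q) > 0" using sum_nonneg nonneg by (metis order_le_neq_trans)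
  thus ?thesis using b_q_difference[OF mg q eq] by (metis of_int_0_less_iff diff_gt_0_iff_gt)
qed

text \<open>Firing a set A \<subseteq> V - {q} (the potential f = -1 on A and 0 elsewhere) moves
  outdeg_A(v) chips out of every v \<in> A, adds chips outside A and lowers b_q by |A|.\<close>
lemma firing_set_lowers_b_q:
  assumes mg: "multigraph V m" and q: "q \<in> V"
    and D: "D \<in> complete_linsys V m q D"
    and A: "A \<subseteq> V - {q}" "A \<noteq> {}"
    and enough: "\<forall>v\<in>A. outdeg V m A v \<le> D v"
  shows "\<exists>D'\<in>complete_linsys V m q D. b_q V m q D' < b_q V m q D"
proof -
  have fin: "finite V" using mg by (rule mg_finite)
  define f where "f = (\<lambda>v. if v \<in> A then -1 else (0::int))"
  define D' where "D' = (\<lambda>v. D v + laplacian V m f v)"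
  have eq: "(\<lambda>v. D' v - D v) = laplacian V m f" unfolding D'_def by simp
  have lap_in_A: "laplacian V m f v = - outdeg V m A v" if v: "v \<in> A" for v
  proof -
    have "laplacian V m f v = (\<Sum>w\<in>V-A. int (m v w) * (f v - f w))"
      by (rule laplacian_on_level_set[OF mg _ v]) (use A v in \<open>auto simp: f_def\<close>)
    also have "\<dots> = - outdeg V m A v" using v by (simp add: f_def outdeg_def sum_negf)
    finally show ?thesis .
  qed
  have lap_outside_A: "laplacian V m f v \<ge> 0" if "v \<notin> A" for v
    using that unfolding laplacian_def f_def by (auto intro!: sum_nonneg)
  have "D' \<in> complete_linsys V m q D"
    unfolding complete_linsys_def lin_equiv_def
  proof (intro CollectI conjI exI ballI impI)
    show "is_divisor V D'"
      using D unfolding complete_linsys_def is_divisor_def D'_def laplacian_def by simp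
    show "(\<lambda>v. D' v - D v) = laplacian V m f" by (rule eq)
    fix v assume "v \<in> V" "v \<noteq> q"
    thus "0 \<le> D' v"
      using D lap_in_A enough lap_outside_A unfolding D'_def complete_linsys_def
      by (cases "v \<in> A") fastforce+
  qed
  moreover have "(\<Sum>v\<in>V. f v - f q) = - int (card A)"
  proof -
    have "f q = 0" using A unfolding f_def by auto
    hence "(\<Sum>v\<in>V. f v - f q) = - int (card (V \<inter> A))"
      using fin by (simp add: f_def sum.If_cases)
    also have "V \<inter> A = A" using A by auto
    finally show ?thesis .
  qed
  moreover have "card A > 0" using A fin by (meson Diff_subset card_gt_0_iff finite_subset)
  ultimately show ?thesis using b_q_difference[OF mg q eq] by force
qed

theorem mainTheorem10:
  fixes V :: "'v set" and m :: "'v \<Rightarrow> 'v \<Rightarrow> nat" and q :: 'v and D :: "'v \<Rightarrow> int"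
  assumes "multigraph V m" and "q \<in> V" and "is_divisor V D"
  shows "q_reduced V m q D \<longleftrightarrow>
           (D \<in> complete_linsys V m q D \<and>
            (\<forall>D' \<in> complete_linsys V m q D. D' \<noteq> D \<longrightarrow> b_q V m q D < b_q V m q D'))"
proof
  assume red: "q_reduced V m q D"
  hence "D \<in> complete_linsys V m q D"
    using self_in_complete_linsys[OF assms(3)] by (simp add: q_reduced_def)
  thus "D \<in> complete_linsys V m q D \<and>
      (\<forall>D' \<in> complete_linsys V m q D. D' \<noteq> D \<longrightarrow> b_q V m q D < b_q V m q D')"
    using reduced_b_q_strictly_minimal[OF assms(1,2) red] by blast
next
  assume min: "D \<in> complete_linsys V m q D \<and>
      (\<forall>D' \<in> complete_linsys V m q D. D' \<noteq> D \<longrightarrow> b_q V m q D < b_q V m q D')"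
  have "\<exists>v\<in>A. D v < outdeg V m A v" if A: "A \<subseteq> V - {q}" "A \<noteq> {}" for A
  proof (rule ccontr)
    assume "\<not> ?thesis"
    then obtain D' where "D' \<in> complete_linsys V m q D" "b_q V m q D' < b_q V m q D"
      using firing_set_lowers_b_q[OF assms(1,2) _ A] min by force
    with min show False by force
  qed
  with min show "q_reduced V m q D" by (auto simp: q_reduced_def complete_linsys_def)
qed

end
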